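(* Let $b$ be a positive real number, let $T=(V,E)$ be a tree with $|V|\ge3$, and let $\ell:V\to[0,1]$ satisfy $\sum_{v\in V}\ell(v)\le1$. For $v\in V$ let $L(v)$ be the set of leaves of $T$ adjacent to $v$, and suppose that $\ell(v)+\sum_{u\in L(v)}\ell(u)\ge |L(v)|/b$ for all $v\in V$. Then $T$ has at most $b$ leaves. *)

theory Defs
  imports Complex_Main
begin

definition simple_graph :: "'a set \<Rightarrow> ('a \<Rightarrow> 'a \<Rightarrow> bool) \<Rightarrow> bool" where
  "simple_graph V E \<longleftrightarrow> finite V \<and> (\<forall>u v. E u v \<longrightarrow> u \<in> V \<and> v \<in> V)
     \<and> (\<forall>u v. E u v \<longrightarrow> E v u) \<and> (\<forall>v. \<not> E v v)"

definition connected_graph :: "'a set \<Rightarrow> ('a \<Rightarrow> 'a \<Rightarrow> bool) \<Rightarrow> bool" where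
  "connected_graph V E \<longleftrightarrow> (\<forall>u\<in>V. \<forall>v\<in>V. E\<^sup>*\<^sup>* u v)"

definition is_cycle :: "('a \<Rightarrow> 'a \<Rightarrow> bool) \<Rightarrow> 'a list \<Rightarrow> bool" where
  "is_cycle E vs \<longleftrightarrow> length vs \<ge> 3 \<and> distinct vs
     \<and> (\<forall>i. Suc i < length vs \<longrightarrow> E (vs ! i) (vs ! Suc i))
     \<and> E (last vs) (hd vs)"

definition is_tree :: "'a set \<Rightarrow> ('a \<Rightarrow> 'a \<Rightarrow> bool) \<Rightarrow> bool" where
  "is_tree V E \<longleftrightarrow> simple_graph V E \<and> V \<noteq> {} \<and> connected_graph V E
     \<and> (\<nexists>vs. is_cycle E vs)"

definition degree :: "'a set \<Rightarrow> ('a \<Rightarrow> 'a \<Rightarrow> bool) \<Rightarrow> 'a \<Rightarrow> nat" where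
  "degree V E v = card {u \<in> V. E v u}"

definition leaves :: "'a set \<Rightarrow> ('a \<Rightarrow> 'a \<Rightarrow> bool) \<Rightarrow> 'a set" where
  "leaves V E = {v \<in> V. degree V E v = 1}"

definition leaf_nbrs :: "'a set \<Rightarrow> ('a \<Rightarrow> 'a \<Rightarrow> bool) \<Rightarrow> 'a \<Rightarrow> 'a set" where
  "leaf_nbrs V E v = {u \<in> leaves V E. E v u}"

end

theory Submission
  imports Defs
begin

text \<open>In a connected graph with at least three vertices no two leaves are adjacent, so every
  leaf hangs off exactly one internal vertex and the leaves are partitioned by the sets L(v) of
  internal vertices v. Summing the hypothesis over the internal vertices therefore gives
  (number of leaves) / b \<le> sum of all weights \<le> 1.\<close>

lemma leaf_neighbours_singleton:
  assumes "simple_graph V E" and "u \<in> leaves V E" and "E u w"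
  shows "{x \<in> V. E u x} = {w}"
proof -
  have "card {x \<in> V. E u x} = 1"
    using assms(2) by (simp add: leaves_def degree_def)
  moreover have "w \<in> {x \<in> V. E u x}"
    using assms(1,3) by (simp add: simple_graph_def)
  ultimately show ?thesis by (metis card_1_singletonE singletonD)
qed

lemma leaves_not_adjacent:
  assumes sg: "simple_graph V E" and con: "connected_graph V E" and "card V \<ge> 3"
    and u: "u \<in> leaves V E" and w: "w \<in> leaves V E"
  shows "\<not> E u w"
proof
  assume e: "E u w"
  have nu: "{x \<in> V. E u x} = {w}"
    using leaf_neighbours_singleton[OF sg u e] .
  have nw: "{x \<in> V. E w x} = {u}"
    using leaf_neighbours_singleton[OF sg w] sg e by (simp add: simple_graph_def)
  have reach: "x \<in> {u, w}" if "E\<^sup>*\<^sup>* u x" for x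
    using that
  proof (induction rule: rtranclp_induct)
    case base
    then show ?case by simp
  next
    case (step y z)
    then have "z \<in> V" using sg by (simp add: simple_graph_def)
    with step nu nw show ?case by blast
  qed
  have "u \<in> V" using u by (simp add: leaves_def)
  then have "V \<subseteq> {u, w}"
    using con reach by (auto simp: connected_graph_def)
  then have "card V \<le> card {u, w}" by (simp add: card_mono)
  also have "\<dots> \<le> 2" by (simp add: card_insert_le_m1)
  finally show False using \<open>card V \<ge> 3\<close> by simp
qed

lemma leaf_nbrs_disjoint:
  assumes "simple_graph V E" and "v \<noteq> w"
  shows "leaf_nbrs V E v \<inter> leaf_nbrs V E w = {}"
proof (rule ccontr)
  assume "leaf_nbrs V E v \<inter> leaf_nbrs V E w \<noteq> {}"
  then obtain u where u: "u \<in> leaves V E" "E v u" "E w u"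
    by (auto simp: leaf_nbrs_def)
  then have "E u v" "E u w" using assms(1) by (auto simp: simple_graph_def)
  then show False
    using leaf_neighbours_singleton[OF assms(1) u(1)] assms(2) by blast
qed

lemma leaves_eq_UN_leaf_nbrs:
  assumes sg: "simple_graph V E" and con: "connected_graph V E" and "card V \<ge> 3"
  shows "leaves V E = (\<Union>v \<in> V - leaves V E. leaf_nbrs V E v)"
proof
  show "leaves V E \<subseteq> (\<Union>v \<in> V - leaves V E. leaf_nbrs V E v)"
  proof
    fix u assume u: "u \<in> leaves V E"
    then have "card {x \<in> V. E u x} = 1" by (simp add: leaves_def degree_def)
    then obtain w where "{x \<in> V. E u x} = {w}" by (meson card_1_singletonE)
    then have "w \<in> V" and e: "E u w" by auto
    moreover have "w \<notin> leaves V E"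
      using leaves_not_adjacent[OF assms u] e by blast
    moreover have "u \<in> leaf_nbrs V E w"
      using u e sg by (simp add: leaf_nbrs_def simple_graph_def)
    ultimately show "u \<in> (\<Union>v \<in> V - leaves V E. leaf_nbrs V E v)" by blast
  qed
qed (auto simp: leaf_nbrs_def)

lemma sum_leaves_eq_sum_leaf_nbrs:
  fixes f :: "'a \<Rightarrow> 'b::comm_monoid_add"
  assumes sg: "simple_graph V E" and "connected_graph V E" and "card V \<ge> 3"
  shows "(\<Sum>u \<in> leaves V E. f u) = (\<Sum>v \<in> V - leaves V E. \<Sum>u \<in> leaf_nbrs V E v. f u)"
proof -
  have fin: "finite V" using sg by (simp add: simple_graph_def)
  have "finite (leaf_nbrs V E v)" for v
    using fin by (rule rev_finite_subset) (auto simp: leaf_nbrs_def leaves_def)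
  then show ?thesis
    using sum.UNION_disjoint[of "V - leaves V E" "leaf_nbrs V E" f] fin
      leaf_nbrs_disjoint[OF sg] leaves_eq_UN_leaf_nbrs[OF assms] by auto
qed

theorem proposition10:
  fixes V :: "'a set" and E :: "'a \<Rightarrow> 'a \<Rightarrow> bool"
    and l :: "'a \<Rightarrow> real" and b :: real
  assumes "b > 0"
    and "is_tree V E"
    and "card V \<ge> 3"
    and "\<forall>v\<in>V. 0 \<le> l v \<and> l v \<le> 1"
    and "(\<Sum>v\<in>V. l v) \<le> 1"
    and "\<forall>v\<in>V. l v + (\<Sum>u\<in>leaf_nbrs V E v. l u) \<ge> real (card (leaf_nbrs V E v)) / b"
  shows "real (card (leaves V E)) \<le> b"
proof -
  have sg: "simple_graph V E" and con: "connected_graph V E"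
    using assms(2) by (auto simp: is_tree_def)
  have fin: "finite V" using sg by (simp add: simple_graph_def)
  let ?N = "V - leaves V E"
  note split = sum_leaves_eq_sum_leaf_nbrs[OF sg con assms(3)]
  have "real (card (leaves V E)) / b = (\<Sum>v \<in> ?N. real (card (leaf_nbrs V E v)) / b)"
    using split[of "\<lambda>_. 1 :: real"] by (simp add: sum_divide_distrib)
  also have "\<dots> \<le> (\<Sum>v \<in> ?N. l v + (\<Sum>u \<in> leaf_nbrs V E v. l u))"
    using assms(6) by (intro sum_mono) auto
  also have "\<dots> = (\<Sum>v \<in> ?N. l v) + (\<Sum>u \<in> leaves V E. l u)"
    by (simp add: sum.distrib split)
  also have "\<dots> = (\<Sum>v \<in> V. l v)"
    using fin by (metis Diff_subset leaves_def mem_Collect_eq subsetI sum.subset_diff)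
  also have "\<dots> \<le> 1" by fact
  finally show ?thesis using assms(1) by (simp add: divide_le_eq)
qed

end
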